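(* Let $U=U_1\times\cdots\times U_m\subset\mathbb{R}^m_+$ with each $U_i\subseteq\mathbb{R}$, let $C\subseteq\mathbb{R}^m$ and $\overline{U}=U\cap C$, and assume $U$ and $\overline{U}$ are convex compact sets. Let $c\in\mathbb{R}^{n_1}$, $d\in\mathbb{R}^{n_2}$, $a_i\in\mathbb{R}^{n_1}$, $g_i\in\mathbb{R}^{n_2}$ ($i\in[m]$). Let $$z_{\rm cp}=\inf_{x,y}\{c^Tx+d^Ty:\ a_i^Tx+g_i^Ty\ge u_i\ \forall u\in\overline{U},\ \forall i\in[m]\},$$ and for a set $S$ let $$z(S)=\inf_{x\in\mathbb{R}^{n_1},\ y:S\to\mathbb{R}^{n_2}}\Big\{c^Tx+\sup_{u\in S}d^Ty(u):\ a_i^Tx+g_i^Ty(u)\ge u_i\ \forall u\in S,\ \forall i\in[m]\Big\},\qquad z_{\rm acp}=z(\overline{U}).$$ Assume the following compactness condition holds for the adaptive problem under $\Pi(\overline{U}^\downarrow)$: for every $x$ that is the first-stage part of some feasible solution of the problem defining $z(\Pi(\overline{U}^\downarrow))$, there is a compact set $Y_x\subseteq\mathbb{R}^{n_2}$ such that for every $u\in\Pi(\overline{U}^\downarrow)$ and $y\in\mathbb{R}^{n_2}$, if $a_i^Tx+g_i^Ty\ge u_i$ for all $i\in[m]$ then $y\in Y_x$. Suppose $0<z_{\rm acp}\le z_{\rm cp}<\infty$. Then, with $\rho_{\rm adapt}=\rho\big(\Pi(\overline{U}^\downarrow),\overline{U}^\downarrow\big)$, $$\frac{z_{\rm acp}}{z_{\rm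 cp}}\ge\rho_{\rm adapt}.$$
   Context: $[m]=\{1,\dots,m\}$. For $S\subseteq\mathbb{R}^m_+$, $S^\downarrow=\{t\in\mathbb{R}^m_+:\exists s\in S,\ t\le s\text{ componentwise}\}$. For $S\subseteq\mathbb{R}^m$, $\Pi_i(S)$ is the projection of $S$ onto the $i$-th coordinate and $\Pi(S)=\Pi_1(S)\times\cdots\times\Pi_m(S)$. For $r\ge0$, $rS=\{rx:x\in S\}$; $\rho(S_1,S_2)=\max\{\rho\ge0:\rho S_1\subseteq S_2\}$. *)

theory Defs
  imports "HOL-Analysis.Analysis"
begin

text \<open>Index set [m] is the finite type 'm; vectors in R^m are real^'m.\<close>

definition down_closure :: "(real^'m) set \<Rightarrow> (real^'m) set" where
  "down_closure S = {t. (\<forall>i. 0 \<le> t$i) \<and> (\<exists>s\<in>S. \<forall>i. t$i \<le> s$i)}"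

definition coord_proj :: "(real^'m) set \<Rightarrow> 'm \<Rightarrow> real set" where
  "coord_proj S i = (\<lambda>s. s$i) ` S"

definition proj_hull :: "(real^'m) set \<Rightarrow> (real^'m) set" where
  "proj_hull S = {u. \<forall>i. u$i \<in> coord_proj S i}"

text \<open>rho(S1,S2) = max{r >= 0. r S1 \<subseteq> S2}, written as a supremum (equal to the max when attained).\<close>
definition scale_factor :: "(real^'m) set \<Rightarrow> (real^'m) set \<Rightarrow> real" where
  "scale_factor S1 S2 = Sup {r. 0 \<le> r \<and> (\<lambda>x. r *\<^sub>R x) ` S1 \<subseteq> S2}"

definition adapt_feasible ::
  "('m \<Rightarrow> real^'n1) \<Rightarrow> ('m \<Rightarrow> real^'n2) \<Rightarrow> (real^'m) set \<Rightarrow> real^'n1 \<Rightarrow> (real^'m \<Rightarrow> real^'n2) \<Rightarrow> bool" where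
  "adapt_feasible a g S x y \<longleftrightarrow> (\<forall>u\<in>S. \<forall>i. a i \<bullet> x + g i \<bullet> y u \<ge> u$i)"

definition z_adapt ::
  "real^'n1 \<Rightarrow> real^'n2 \<Rightarrow> ('m \<Rightarrow> real^'n1) \<Rightarrow> ('m \<Rightarrow> real^'n2) \<Rightarrow> (real^'m) set \<Rightarrow> ereal" where
  "z_adapt c d a g S = Inf {ereal (c \<bullet> x) + (SUP u\<in>S. ereal (d \<bullet> y u)) | x y. adapt_feasible a g S x y}"

definition z_static ::
  "real^'n1 \<Rightarrow> real^'n2 \<Rightarrow> ('m \<Rightarrow> real^'n1) \<Rightarrow> ('m \<Rightarrow> real^'n2) \<Rightarrow> (real^'m) set \<Rightarrow> ereal" where
  "z_static c d a g S = Inf {ereal (c \<bullet> x + d \<bullet> y) | x y. \<forall>u\<in>S. \<forall>i. a i \<bullet> x + g i \<bullet> y \<ge> u$i}"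

end

theory Submission
  imports Defs
begin

text \<open>
  Let \<open>t\<close> be the coordinatewise maximum of \<open>Ubar\<close>; it lies in the projection hull.
  If \<open>r > 0\<close> scales the projection hull into the down-closure, then \<open>r t \<le> s\<close> for some
  \<open>s \<in> Ubar\<close>, so \<open>s / r\<close> dominates all of \<open>Ubar\<close>. Hence for every adaptive solution
  \<open>(x, y)\<close> the static solution \<open>(x / r, y s / r)\<close> is feasible, and its cost is at most
  \<open>1 / r\<close> times the adaptive cost: \<open>r z_static \<le> z_adapt\<close>.
\<close>

lemma z_adapt_empty: "z_adapt c d a g {} = -\<infinity>"
proof -
  have "z_adapt c d a g {} \<le> ereal (c \<bullet> 0) + (SUP u\<in>{}. ereal (d \<bullet> (\<lambda>_. 0) u))"
    unfolding z_adapt_def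
    by (rule Inf_lower, rule CollectI, rule exI[of _ 0], rule exI[of _ "\<lambda>_. 0"])
      (simp add: adapt_feasible_def)
  then show ?thesis
    by (simp add: bot_ereal_def)
qed

lemma compact_obtains_coordinatewise_max:
  fixes S :: "(real^'m) set"
  assumes "compact S" "S \<noteq> {}"
  obtains t where "t \<in> proj_hull S" "\<forall>u\<in>S. \<forall>i. u$i \<le> t$i"
proof -
  have "\<exists>s\<in>S. \<forall>u\<in>S. u$i \<le> s$i" for i
  proof -
    have "compact ((\<lambda>s. s$i) ` S)"
      by (intro compact_continuous_image continuous_intros assms(1))
    then obtain m where "m \<in> (\<lambda>s. s$i) ` S" "\<forall>v\<in>(\<lambda>s. s$i) ` S. v \<le> m"
      using compact_attains_sup assms(2) by (metis image_is_empty)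
    then show ?thesis
      by auto
  qed
  then obtain f where f: "\<And>i. f i \<in> S" "\<And>i u. u \<in> S \<Longrightarrow> u$i \<le> f i $ i"
    by metis
  show thesis
  proof
    show "(\<chi> i. f i $ i) \<in> proj_hull S"
      using f(1) by (auto simp: proj_hull_def coord_proj_def)
    show "\<forall>u\<in>S. \<forall>i. u$i \<le> (\<chi> i. f i $ i) $ i"
      using f(2) by simp
  qed
qed

lemma proj_hull_mono: "S \<subseteq> T \<Longrightarrow> proj_hull S \<subseteq> proj_hull T"
  unfolding proj_hull_def coord_proj_def by blast

lemma subset_down_closure: "\<forall>u\<in>S. \<forall>i. 0 \<le> u$i \<Longrightarrow> S \<subseteq> down_closure S"
  by (auto simp: down_closure_def)

lemma zero_in_down_closure: "\<forall>u\<in>S. \<forall>i. 0 \<le> u$i \<Longrightarrow> S \<noteq> {} \<Longrightarrow> 0 \<in> down_closure S"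
  by (auto simp: down_closure_def)

lemma scale_factor_le:
  assumes "0 \<in> S2" "\<And>r. 0 \<le> r \<Longrightarrow> (\<lambda>x. r *\<^sub>R x) ` S1 \<subseteq> S2 \<Longrightarrow> r \<le> q"
  shows "scale_factor S1 S2 \<le> q"
  unfolding scale_factor_def
proof (rule cSup_least)
  have "(\<lambda>x. 0 *\<^sub>R x) ` S1 \<subseteq> S2"
    using assms(1) by auto
  then show "{r. 0 \<le> r \<and> (\<lambda>x. r *\<^sub>R x) ` S1 \<subseteq> S2} \<noteq> {}"
    by blast
qed (use assms(2) in blast)

lemma z_static_scaled_le_z_adapt:
  assumes r: "0 < r" and s: "s \<in> S" "\<forall>u\<in>S. \<forall>i. r * u$i \<le> s$i"
  shows "ereal r * z_static c d a g S \<le> z_adapt c d a g S"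
  unfolding z_adapt_def
proof (rule Inf_greatest, clarify)
  fix x y
  assume feasible: "adapt_feasible a g S x y"
  have static_feasible: "u$i \<le> a i \<bullet> ((1/r) *\<^sub>R x) + g i \<bullet> ((1/r) *\<^sub>R y s)"
    if "u \<in> S" for u i
  proof -
    have "u$i \<le> s$i / r"
      using s(2) that r by (simp add: field_simps)
    also have "\<dots> \<le> (a i \<bullet> x + g i \<bullet> y s) / r"
      using feasible s(1) r unfolding adapt_feasible_def by (simp add: divide_right_mono)
    also have "\<dots> = a i \<bullet> ((1/r) *\<^sub>R x) + g i \<bullet> ((1/r) *\<^sub>R y s)"
      by (simp add: add_divide_distrib)
    finally show ?thesis .
  qed
  have "z_static c d a g S \<le> ereal (c \<bullet> ((1/r) *\<^sub>R x) + d \<bullet> ((1/r) *\<^sub>R y s))"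
    unfolding z_static_def using static_feasible by (intro Inf_lower) blast
  then have "ereal r * z_static c d a g S \<le> ereal r * ereal (c \<bullet> ((1/r) *\<^sub>R x) + d \<bullet> ((1/r) *\<^sub>R y s))"
    using r by (intro ereal_mult_left_mono) auto
  also have "\<dots> = ereal (c \<bullet> x) + ereal (d \<bullet> y s)"
    using r by (simp add: field_simps)
  also have "\<dots> \<le> ereal (c \<bullet> x) + (SUP u\<in>S. ereal (d \<bullet> y u))"
    by (intro add_left_mono SUP_upper s(1))
  finally show "ereal r * z_static c d a g S \<le> ereal (c \<bullet> x) + (SUP u\<in>S. ereal (d \<bullet> y u))" .
qed

lemma z_static_scaled_le_z_adapt_if_proj_hull_scales:
  fixes S :: "(real^'m) set"
  assumes "compact S" "S \<noteq> {}" and nonneg: "\<forall>u\<in>S. \<forall>i. 0 \<le> u$i"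
    and "0 < r" and scaled: "(\<lambda>x. r *\<^sub>R x) ` proj_hull (down_closure S) \<subseteq> down_closure S"
  shows "ereal r * z_static c d a g S \<le> z_adapt c d a g S"
proof -
  obtain t where t: "t \<in> proj_hull S" "\<forall>u\<in>S. \<forall>i. u$i \<le> t$i"
    using assms(1,2) by (rule compact_obtains_coordinatewise_max)
  have "r *\<^sub>R t \<in> down_closure S"
    using scaled t(1) proj_hull_mono[OF subset_down_closure[OF nonneg]] by blast
  then obtain s where "s \<in> S" "\<forall>i. r * t$i \<le> s$i"
    unfolding down_closure_def by auto
  moreover from this have "\<forall>u\<in>S. \<forall>i. r * u$i \<le> s$i"
    using t(2) \<open>0 < r\<close> by (meson mult_left_mono less_imp_le order_trans)
  ultimately show ?thesis
    using \<open>0 < r\<close> by (intro z_static_scaled_le_z_adapt)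
qed

theorem theorem3:
  fixes Ui :: "'m::finite \<Rightarrow> real set"
    and C :: "(real^'m) set"
    and c :: "real^'n1" and d :: "real^'n2"
    and a :: "'m \<Rightarrow> real^'n1" and g :: "'m \<Rightarrow> real^'n2"
  defines "U \<equiv> {u. \<forall>i. u$i \<in> Ui i}"
  defines "Ubar \<equiv> U \<inter> C"
  assumes U_nonneg: "\<forall>u\<in>U. \<forall>i. 0 \<le> u$i"
    and "convex U" and "compact U"
    and "convex Ubar" and "compact Ubar"
    and compactness: "\<forall>x. (\<exists>y. adapt_feasible a g (proj_hull (down_closure Ubar)) x y) \<longrightarrow>
        (\<exists>Y :: (real^'n2) set. compact Y \<and>
           (\<forall>u\<in>proj_hull (down_closure Ubar). \<forall>y. (\<forall>i. a i \<bullet> x + g i \<bullet> y \<ge> u$i) \<longrightarrow> y \<in> Y))"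
    and zpos: "0 < z_adapt c d a g Ubar"
    and zle: "z_adapt c d a g Ubar \<le> z_static c d a g Ubar"
    and zfin: "z_static c d a g Ubar < \<infinity>"
  shows "real_of_ereal (z_adapt c d a g Ubar) / real_of_ereal (z_static c d a g Ubar)
           \<ge> scale_factor (proj_hull (down_closure Ubar)) (down_closure Ubar)"
proof -
  have nonneg: "\<forall>u\<in>Ubar. \<forall>i. 0 \<le> u$i"
    using U_nonneg unfolding Ubar_def by auto
  have "Ubar \<noteq> {}"
    using zpos z_adapt_empty by (metis MInfty_neq_ereal(1) not_MInfty_nonneg less_imp_le)
  obtain A B where A: "z_adapt c d a g Ubar = ereal A" "0 < A"
    and B: "z_static c d a g Ubar = ereal B" "0 < B"
    using zpos zle zfin by (cases "z_adapt c d a g Ubar"; cases "z_static c d a g Ubar") auto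
  show ?thesis
  proof (rule scale_factor_le)
    show "0 \<in> down_closure Ubar"
      using nonneg \<open>Ubar \<noteq> {}\<close> by (rule zero_in_down_closure)
  next
    fix r :: real
    assume "0 \<le> r" and scaled: "(\<lambda>x. r *\<^sub>R x) ` proj_hull (down_closure Ubar) \<subseteq> down_closure Ubar"
    have "r * B \<le> A" if "0 < r"
    proof -
      have "ereal r * z_static c d a g Ubar \<le> z_adapt c d a g Ubar"
        using \<open>compact Ubar\<close> \<open>Ubar \<noteq> {}\<close> nonneg that scaled
        by (rule z_static_scaled_le_z_adapt_if_proj_hull_scales)
      then show ?thesis
        using A B by simp
    qed
    then show "r \<le> real_of_ereal (z_adapt c d a g Ubar) / real_of_ereal (z_static c d a g Ubar)"
      using \<open>0 \<le> r\<close> A B by (cases "r = 0") (auto simp: field_simps)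
  qed
qed

end
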